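(* Let $\sigma,\nu\in\mathbb R$ and $V:\mathbb R\to\mathbb R$ smooth. Let $M,K$ be the $6\times6$ matrices $$M=\begin{pmatrix}0&\frac\sigma2&-\frac12&0&0&0\\-\frac\sigma2&0&0&0&0&0\\\frac12&0&0&0&0&0\\0&0&0&0&0&0\\0&0&0&0&0&0\\0&0&0&0&0&0\end{pmatrix},\quad K=\begin{pmatrix}0&0&0&0&\frac\sigma2&\nu\\0&0&0&0&0&0\\0&0&0&-1&0&0\\0&0&1&0&0&0\\-\frac\sigma2&0&0&0&0&0\\-\nu&0&0&0&0&0\end{pmatrix},$$ and $S(\mathbf z)=uw-V(u)-\frac\nu2v^2-\frac\sigma2\theta\rho$ for $\mathbf z=(u,\theta,\phi,w,\rho,v)^T$. Let $\mathbf z_h=(u_h,\theta_h,\phi_h,w_h,\rho_h,v_h)^T$ be continuously differentiable in $t$ with values in $(V_h)^6$ and satisfy the DG scheme with central fluxes: for every $j$ and every $\boldsymbol\varphi\in(V_h)^6$, $$\int_{I_j}M\partial_t\mathbf z_h\cdot\boldsymbol\varphi\,dx-\int_{I_j}K\mathbf z_h\cdot\partial_x\boldsymbol\varphi\,dx+\big(K\{\mathbf z_h\}\cdot\boldsymbol\varphi^-\big)_{j+\frac12}-\big(K\{\mathbf z_h\}\cdot\boldsymbol\varphi^+\big)_{j-\frac12}=\int_{I_j}\nabla_{\mathbf z}S(\mathbf z_h)\cdot\boldsymbol\varphi\,dx.$$ Then the discrete energy $\mathcal E_h=\int_\Omega\big(-V(u_h)+\frac\nu2v_h^2\big)dx$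 is constant in time.
   Context: This is a DG discretization of the BBM–KdV equation $u_t-\sigma u_{xxt}=V'(u)_x+\nu u_{xxx}$ in the multi-symplectic form $M\mathbf z_t+K\mathbf z_x=\nabla_{\mathbf z}S(\mathbf z)$ above. Mesh and spaces: a one-dimensional domain $\Omega$ is partitioned into cells $I_j=[x_{j-1/2},x_{j+1/2}]$, $j=1,\dots,N$, with periodic boundary conditions (interface indices modulo $N$). For fixed $k\ge0$, $V_h=\{v\in L^2(\Omega): v|_{I_j}\text{ is a polynomial of degree}\le k\ \forall j\}$. For vector functions in $(V_h)^6$, superscripts $\pm$ at $x_{j+1/2}$ denote right/left limits and $\{\mathbf v\}=\frac12(\mathbf v^++\mathbf v^-)$; subscript $j\pm\frac12$ denotes evaluation at $x_{j\pm1/2}$. *)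

theory Defs
  imports "HOL-Analysis.Analysis" "HOL-Computational_Algebra.Polynomial"
begin

text \<open>Components of z = (u, theta, phi, w, rho, v) are indexed 0..5.
Cells are I_j = [xs j, xs (Suc j)] for j < N; Omega = [xs 0, xs N], periodic.
An element of (V_h)^6 is P :: nat => nat => real poly, P a j = component a on cell j.\<close>

definition smooth_fun :: "(real \<Rightarrow> real) \<Rightarrow> bool" where
  "smooth_fun V \<longleftrightarrow> (\<forall>n x. ((deriv ^^ n) V) differentiable (at x))"

definition Mmat :: "real \<Rightarrow> nat \<Rightarrow> nat \<Rightarrow> real" where
  "Mmat \<sigma> a b =
     (if a = 0 \<and> b = 1 then \<sigma>/2
      else if a = 0 \<and> b = 2 then -1/2
      else if a = 1 \<and> b = 0 then -\<sigma>/2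
      else if a = 2 \<and> b = 0 then 1/2
      else 0)"

definition Kmat :: "real \<Rightarrow> real \<Rightarrow> nat \<Rightarrow> nat \<Rightarrow> real" where
  "Kmat \<sigma> \<nu> a b =
     (if a = 0 \<and> b = 4 then \<sigma>/2
      else if a = 0 \<and> b = 5 then \<nu>
      else if a = 2 \<and> b = 3 then -1
      else if a = 3 \<and> b = 2 then 1
      else if a = 4 \<and> b = 0 then -\<sigma>/2
      else if a = 5 \<and> b = 0 then -\<nu>
      else 0)"

definition matdot :: "(nat \<Rightarrow> nat \<Rightarrow> real) \<Rightarrow> (nat \<Rightarrow> real) \<Rightarrow> (nat \<Rightarrow> real) \<Rightarrow> real" where
  "matdot A v w = (\<Sum>a<6. (\<Sum>b<6. A a b * v b) * w a)"

definition Sfun :: "(real \<Rightarrow> real) \<Rightarrow> real \<Rightarrow> real \<Rightarrow> (nat \<Rightarrow> real) \<Rightarrow> real" where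
  "Sfun V \<sigma> \<nu> z = z 0 * z 3 - V (z 0) - \<nu>/2 * (z 5)^2 - \<sigma>/2 * z 1 * z 4"

definition gradS :: "(real \<Rightarrow> real) \<Rightarrow> real \<Rightarrow> real \<Rightarrow> (nat \<Rightarrow> real) \<Rightarrow> nat \<Rightarrow> real" where
  "gradS V \<sigma> \<nu> z a = deriv (\<lambda>s. Sfun V \<sigma> \<nu> (z(a := s))) (z a)"

text \<open>Right limit at interface x_{i-1/2} (= xs i, i < N): value of cell i at its left end.\<close>
definition rlim :: "nat \<Rightarrow> (nat \<Rightarrow> real) \<Rightarrow> (nat \<Rightarrow> nat \<Rightarrow> real poly) \<Rightarrow> nat \<Rightarrow> nat \<Rightarrow> real" where
  "rlim N xs P i a = poly (P a i) (xs i)"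

text \<open>Left limit at the same interface: value of the (periodically) preceding cell at its right end.\<close>
definition llim :: "nat \<Rightarrow> (nat \<Rightarrow> real) \<Rightarrow> (nat \<Rightarrow> nat \<Rightarrow> real poly) \<Rightarrow> nat \<Rightarrow> nat \<Rightarrow> real" where
  "llim N xs P i a = poly (P a ((i + N - 1) mod N)) (xs (Suc ((i + N - 1) mod N)))"

definition avg :: "nat \<Rightarrow> (nat \<Rightarrow> real) \<Rightarrow> (nat \<Rightarrow> nat \<Rightarrow> real poly) \<Rightarrow> nat \<Rightarrow> nat \<Rightarrow> real" where
  "avg N xs P i a = (rlim N xs P i a + llim N xs P i a) / 2"

text \<open>DG equation on cell j with central fluxes, for z_h = Z, d/dt z_h = dZ, test function phi
(phi a = component a of the test function on cell j).\<close>
definition dg_eq :: "real \<Rightarrow> real \<Rightarrow> (real \<Rightarrow> real) \<Rightarrow> nat \<Rightarrow> (nat \<Rightarrow> real)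
    \<Rightarrow> (nat \<Rightarrow> nat \<Rightarrow> real poly) \<Rightarrow> (nat \<Rightarrow> nat \<Rightarrow> real poly) \<Rightarrow> nat \<Rightarrow> (nat \<Rightarrow> real poly) \<Rightarrow> bool" where
  "dg_eq \<sigma> \<nu> V N xs Z dZ j \<phi> \<longleftrightarrow>
     integral {xs j..xs (Suc j)}
        (\<lambda>x. matdot (Mmat \<sigma>) (\<lambda>b. poly (dZ b j) x) (\<lambda>a. poly (\<phi> a) x))
   - integral {xs j..xs (Suc j)}
        (\<lambda>x. matdot (Kmat \<sigma> \<nu>) (\<lambda>b. poly (Z b j) x) (\<lambda>a. poly (pderiv (\<phi> a)) x))
   + matdot (Kmat \<sigma> \<nu>) (avg N xs Z (Suc j mod N)) (\<lambda>a. poly (\<phi> a) (xs (Suc j)))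
   - matdot (Kmat \<sigma> \<nu>) (avg N xs Z j) (\<lambda>a. poly (\<phi> a) (xs j))
   = integral {xs j..xs (Suc j)}
        (\<lambda>x. \<Sum>a<6. gradS V \<sigma> \<nu> (\<lambda>b. poly (Z b j) x) a * poly (\<phi> a) x)"

definition energy :: "(real \<Rightarrow> real) \<Rightarrow> real \<Rightarrow> nat \<Rightarrow> (nat \<Rightarrow> real) \<Rightarrow> (nat \<Rightarrow> nat \<Rightarrow> real poly) \<Rightarrow> real" where
  "energy V \<nu> N xs Z =
     (\<Sum>j<N. integral {xs j..xs (Suc j)} (\<lambda>x. - V (poly (Z 0 j) x) + \<nu>/2 * (poly (Z 5 j) x)^2))"

end

theory Submission
  imports Defs
begin

text \<open>Testing the scheme with functions supported in a single component turns it into a weak system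
for the cellwise L2 pairing \<open>dg_mass\<close> and the central-flux form \<open>dg_dx\<close>, the DG version of
the pairing of \<open>F'\<close> with \<open>G\<close>. On a periodic mesh \<open>dg_dx\<close> is skew-symmetric: integrating by parts on
each cell leaves interface terms that telescope. Components 3--5 of the system contain no time
derivative, so they hold at every time and can be differentiated in time. Testing component 0
with \<open>u\<^sub>t\<close> and eliminating every other term with these equations, symmetry and skew-symmetry
leaves exactly \<open>dE\<^sub>h/dt = 0\<close>.\<close>

lemma gradS_eqI:
  "((\<lambda>s. Sfun V \<sigma> \<nu> (z(a := s))) has_real_derivative D) (at (z a)) \<Longrightarrow> gradS V \<sigma> \<nu> z a = D"
  unfolding gradS_def by (rule DERIV_imp_deriv)

lemma gradS_components:
  assumes "V differentiable (at (z 0))"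
  shows "gradS V \<sigma> \<nu> z 0 = z 3 - deriv V (z 0)" and "gradS V \<sigma> \<nu> z 1 = -\<sigma>/2 * z 4"
    and "gradS V \<sigma> \<nu> z 2 = 0" and "gradS V \<sigma> \<nu> z 3 = z 0"
    and "gradS V \<sigma> \<nu> z 4 = -\<sigma>/2 * z 1" and "gradS V \<sigma> \<nu> z 5 = -\<nu> * z 5"
proof -
  have "(V has_real_derivative deriv V (z 0)) (at (z 0))"
    using assms DERIV_deriv_iff_real_differentiable by blast
  then show "gradS V \<sigma> \<nu> z 0 = z 3 - deriv V (z 0)"
    by (intro gradS_eqI) (auto simp: Sfun_def intro!: derivative_eq_intros)
qed (intro gradS_eqI; auto simp: Sfun_def intro!: derivative_eq_intros)+

section \<open>Central-flux DG bilinear forms\<close>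

text \<open>Periodic left neighbour; adding \<open>N\<close> first avoids the truncated \<open>0 - 1\<close> on \<open>nat\<close>.\<close>

definition cell_pred :: "nat \<Rightarrow> nat \<Rightarrow> nat" where
  "cell_pred N i = (i + N - 1) mod N"

lemma cell_pred_less: "i < N \<Longrightarrow> cell_pred N i < N"
  unfolding cell_pred_def by simp

lemma cell_pred_Suc_mod:
  assumes "j < N" shows "cell_pred N (Suc j mod N) = j"
proof (cases "Suc j < N")
  case True
  then show ?thesis unfolding cell_pred_def by simp
next
  case False
  with assms have "Suc j = N" by simp
  then show ?thesis unfolding cell_pred_def by simp
qed

lemma Suc_cell_pred_mod:
  assumes "i < N" shows "Suc (cell_pred N i) mod N = i"
proof (cases i)
  case 0
  with assms show ?thesis unfolding cell_pred_def by simp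
next
  case (Suc i')
  with assms show ?thesis unfolding cell_pred_def by simp
qed

lemma sum_rotate_mod: "(\<Sum>j<N. h (Suc j mod N)) = (\<Sum>j<N. h j)"
  by (rule sum.reindex_bij_witness[where i = "cell_pred N" and j = "\<lambda>j. Suc j mod N"])
    (auto simp: cell_pred_Suc_mod Suc_cell_pred_mod cell_pred_less)

definition central_flux :: "nat \<Rightarrow> (nat \<Rightarrow> real) \<Rightarrow> (nat \<Rightarrow> real poly) \<Rightarrow> nat \<Rightarrow> real" where
  "central_flux N xs F i = (poly (F i) (xs i) + poly (F (cell_pred N i)) (xs (Suc (cell_pred N i)))) / 2"

definition cell_mass :: "(nat \<Rightarrow> real) \<Rightarrow> nat \<Rightarrow> real poly \<Rightarrow> real poly \<Rightarrow> real" where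
  "cell_mass xs j p q = integral {xs j..xs (Suc j)} (\<lambda>x. poly p x * poly q x)"

text \<open>After integration by parts this is the central-flux discretisation of the pairing of
\<open>F'\<close> with \<open>q\<close> on cell \<open>j\<close>.\<close>

definition cell_dx :: "nat \<Rightarrow> (nat \<Rightarrow> real) \<Rightarrow> (nat \<Rightarrow> real poly) \<Rightarrow> nat \<Rightarrow> real poly \<Rightarrow> real" where
  "cell_dx N xs F j q = - cell_mass xs j (F j) (pderiv q)
     + central_flux N xs F (Suc j mod N) * poly q (xs (Suc j)) - central_flux N xs F j * poly q (xs j)"

definition dg_mass :: "nat \<Rightarrow> (nat \<Rightarrow> real) \<Rightarrow> (nat \<Rightarrow> real poly) \<Rightarrow> (nat \<Rightarrow> real poly) \<Rightarrow> real" where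
  "dg_mass N xs F G = (\<Sum>j<N. cell_mass xs j (F j) (G j))"

definition dg_dx :: "nat \<Rightarrow> (nat \<Rightarrow> real) \<Rightarrow> (nat \<Rightarrow> real poly) \<Rightarrow> (nat \<Rightarrow> real poly) \<Rightarrow> real" where
  "dg_dx N xs F G = (\<Sum>j<N. cell_dx N xs F j (G j))"

lemma integrable_poly_mult: "(\<lambda>x. poly p x * poly q x :: real) integrable_on {a..b}"
  by (intro integrable_continuous_interval continuous_intros)

lemma integrable_scaled_poly_mult: "(\<lambda>x. c * (poly p x * poly q x) :: real) integrable_on {a..b}"
  by (intro integrable_continuous_interval continuous_intros)

lemma cell_mass_commute: "cell_mass xs j p q = cell_mass xs j q p"
  unfolding cell_mass_def by (simp add: mult.commute)

lemma dg_mass_commute: "dg_mass N xs F G = dg_mass N xs G F"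
  unfolding dg_mass_def by (simp add: cell_mass_commute)

lemma cell_mass_by_parts:
  assumes "xs j \<le> xs (Suc j)"
  shows "cell_mass xs j p (pderiv q) + cell_mass xs j q (pderiv p)
    = poly p (xs (Suc j)) * poly q (xs (Suc j)) - poly p (xs j) * poly q (xs j)"
proof -
  have "((\<lambda>x. poly (pderiv (p * q)) x) has_integral poly (p * q) (xs (Suc j)) - poly (p * q) (xs j))
      {xs j..xs (Suc j)}"
    using assms poly_DERIV[of "p * q"] by (intro fundamental_theorem_of_calculus)
      (auto simp del: poly_mult simp: has_real_derivative_iff_has_vector_derivative[symmetric]
        intro: has_field_derivative_at_within)
  then show ?thesis
    unfolding cell_mass_def
    by (simp add: pderiv_mult integral_unique integral_add[symmetric] integrable_poly_mult algebra_simps)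
qed

lemma dg_dx_skew:
  assumes "\<forall>j<N. xs j \<le> xs (Suc j)"
  shows "dg_dx N xs F G = - dg_dx N xs G F"
proof -
  define h where "h i = (poly (F i) (xs i) * poly (G (cell_pred N i)) (xs (Suc (cell_pred N i)))
    + poly (G i) (xs i) * poly (F (cell_pred N i)) (xs (Suc (cell_pred N i)))) / 2" for i
  have "cell_dx N xs F j (G j) + cell_dx N xs G j (F j) = h (Suc j mod N) - h j" if "j < N" for j
    using cell_mass_by_parts[of xs j "F j" "G j"] assms that
    unfolding cell_dx_def central_flux_def h_def cell_pred_Suc_mod[OF that]
    by (simp add: algebra_simps add_divide_distrib diff_divide_distrib)
  then have "dg_dx N xs F G + dg_dx N xs G F = (\<Sum>j<N. h (Suc j mod N) - h j)"
    unfolding dg_dx_def sum.distrib[symmetric] by (intro sum.cong) auto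
  also have "\<dots> = 0"
    by (simp add: sum_subtractf sum_rotate_mod)
  finally show ?thesis by linarith
qed

section \<open>The scheme tested componentwise\<close>

lemma sum_lessThan_6: "(\<Sum>a<6. f a) = f 0 + f 1 + f 2 + f 3 + f 4 + f (5::nat)"
  by (simp add: eval_nat_numeral)

lemma matdot_unit_test:
  "c < 6 \<Longrightarrow> matdot A v (\<lambda>a. if a = c then y else 0) = (\<Sum>b<6. A c b * v b) * y"
  unfolding matdot_def by (simp add: if_distrib[of "\<lambda>r. _ * r"] cong: if_cong)

lemma avg_eq_central_flux: "avg N xs Z i a = central_flux N xs (Z a) i"
  unfolding avg_def central_flux_def rlim_def llim_def cell_pred_def by simp

lemma dg_eq_unit_test:
  assumes "c < 6"
  shows "dg_eq \<sigma> \<nu> V N xs P Q j (\<lambda>a. if a = c then q else 0) \<longleftrightarrow>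
    (\<Sum>b<6. Mmat \<sigma> c b * cell_mass xs j (Q b j) q) + (\<Sum>b<6. Kmat \<sigma> \<nu> c b * cell_dx N xs (P b) j q)
    = integral {xs j..xs (Suc j)} (\<lambda>x. gradS V \<sigma> \<nu> (\<lambda>b. poly (P b j) x) c * poly q x)"
proof -
  have unit: "poly (if a = c then p else 0) x = (if a = c then poly p x else 0)"
    "pderiv (if a = c then p else 0) = (if a = c then pderiv p else 0)" for a and p :: "real poly" and x
    by simp_all
  show ?thesis
    using assms unfolding dg_eq_def
    by (simp add: unit matdot_unit_test cell_dx_def cell_mass_def avg_eq_central_flux sum_distrib_left
        sum_distrib_right integral_sum integrable_scaled_poly_mult mult.assoc if_distrib[of "\<lambda>r. _ * r"]
        cong: if_cong)
      (simp add: sum_subtractf sum.distrib algebra_simps)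
qed

lemma dg_eq_unit_test_sum:
  assumes "c < 6" and "\<forall>j<N. dg_eq \<sigma> \<nu> V N xs P Q j (\<lambda>a. if a = c then G j else 0)"
  shows "(\<Sum>b<6. Mmat \<sigma> c b * dg_mass N xs (Q b) G) + (\<Sum>b<6. Kmat \<sigma> \<nu> c b * dg_dx N xs (P b) G)
    = (\<Sum>j<N. integral {xs j..xs (Suc j)} (\<lambda>x. gradS V \<sigma> \<nu> (\<lambda>b. poly (P b j) x) c * poly (G j) x))"
proof -
  have "(\<Sum>b<6. Mmat \<sigma> c b * dg_mass N xs (Q b) G) + (\<Sum>b<6. Kmat \<sigma> \<nu> c b * dg_dx N xs (P b) G)
    = (\<Sum>j<N. (\<Sum>b<6. Mmat \<sigma> c b * cell_mass xs j (Q b j) (G j))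
               + (\<Sum>b<6. Kmat \<sigma> \<nu> c b * cell_dx N xs (P b) j (G j)))"
    unfolding dg_mass_def dg_dx_def sum_distrib_left sum.distrib by (simp add: sum.swap[of _ "{..<6}"])
  also have "\<dots> = (\<Sum>j<N. integral {xs j..xs (Suc j)} (\<lambda>x. gradS V \<sigma> \<nu> (\<lambda>b. poly (P b j) x) c * poly (G j) x))"
    using assms by (intro sum.cong) (auto simp: dg_eq_unit_test)
  finally show ?thesis .
qed

text \<open>\<open>eq3\<close>--\<open>eq5\<close> are the time derivatives of components 3--5 of the weak system.\<close>

lemma energy_rate_identity:
  fixes M B :: "'f \<Rightarrow> 'f \<Rightarrow> real" and R :: "'f \<Rightarrow> real"
  assumes M_commute: "\<And>F G. M F G = M G F" and B_skew: "\<And>F G. B F G = - B G F"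
    and "u' \<in> A" "\<theta>' \<in> A" "\<phi>' \<in> A" "w \<in> A" "\<rho> \<in> A" "v \<in> A"
    and eq0: "\<forall>G\<in>A. \<sigma>/2 * M \<theta>' G - 1/2 * M \<phi>' G + \<sigma>/2 * B \<rho> G + \<nu> * B v G = M w G - R G"
    and eq1: "\<forall>G\<in>A. \<sigma> * M u' G = \<sigma> * M \<rho> G"
    and eq2: "\<forall>G\<in>A. M u' G = 2 * B w G"
    and eq3: "\<forall>G\<in>A. B \<phi>' G = M u' G"
    and eq4: "\<forall>G\<in>A. \<sigma> * B u' G = \<sigma> * M \<theta>' G"
    and eq5: "\<forall>G\<in>A. \<nu> * B u' G = \<nu> * M v' G"
  shows "R u' = \<nu> * M v v'"
proof -
  have Bww: "B w w = 0"
    using B_skew[of w w] by simp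
  have Mwu: "M w u' = 0"
    using M_commute[of w u'] eq2 Bww \<open>w \<in> A\<close> by simp
  have "M \<phi>' u' = 2 * B w \<phi>'"
    using M_commute[of \<phi>' u'] eq2 \<open>\<phi>' \<in> A\<close> by simp
  also have "\<dots> = - 2 * M w u'"
    using B_skew[of w \<phi>'] eq3 M_commute[of w u'] \<open>w \<in> A\<close> by simp
  finally have M\<phi>u: "M \<phi>' u' = 0"
    using Mwu by simp
  have "\<sigma> * B \<rho> u' = - (\<sigma> * B u' \<rho>)"
    using B_skew[of \<rho> u'] by simp
  also have "\<dots> = - (\<sigma> * M \<theta>' \<rho>)"
    using bspec[OF eq4 \<open>\<rho> \<in> A\<close>] by simp
  also have "\<dots> = - (\<sigma> * M \<theta>' u')"
    using bspec[OF eq1 \<open>\<theta>' \<in> A\<close>] M_commute[of \<theta>' \<rho>] M_commute[of \<theta>' u'] by metis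
  finally have B\<rho>u: "\<sigma> * B \<rho> u' = - (\<sigma> * M \<theta>' u')" .
  have "\<nu> * B v u' = - (\<nu> * B u' v)"
    using B_skew[of v u'] by simp
  also have "\<dots> = - (\<nu> * M v v')"
    using bspec[OF eq5 \<open>v \<in> A\<close>] M_commute[of v' v] by simp
  finally have Bvu: "\<nu> * B v u' = - (\<nu> * M v v')" .
  show ?thesis
    using eq0 \<open>u' \<in> A\<close> Mwu M\<phi>u B\<rho>u Bvu by auto
qed

section \<open>Polynomials with time-dependent coefficients\<close>

lemma poly_eq_sum_coeff_atMost:
  fixes p :: "'a::{comm_semiring_0,semiring_1} poly"
  assumes "degree p \<le> n" shows "poly p x = (\<Sum>i\<le>n. coeff p i * x ^ i)"
  unfolding poly_altdef by (rule sum.mono_neutral_left) (use assms in \<open>auto simp: coeff_eq_0\<close>)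

lemma continuous_on_poly_family:
  fixes F :: "real \<Rightarrow> real poly"
  assumes "\<forall>s\<in>I. degree (F s) \<le> k" and "\<forall>m. continuous_on I (\<lambda>s. coeff (F s) m)"
  shows "continuous_on (I \<times> X) (\<lambda>p. poly (F (fst p)) (snd p))"
proof -
  have "continuous_on (I \<times> X) (\<lambda>p. \<Sum>i\<le>k. coeff (F (fst p)) i * snd p ^ i)"
    by (intro continuous_intros continuous_on_compose2[OF assms(2)[rule_format]]) auto
  then show ?thesis
    by (rule continuous_on_cong[THEN iffD1, rotated 2]) (use assms(1) in \<open>auto simp: poly_eq_sum_coeff_atMost\<close>)
qed

lemma has_real_derivative_poly_family:
  fixes F :: "real \<Rightarrow> real poly"
  assumes "t \<in> I" and "\<forall>s\<in>I. degree (F s) \<le> k" and "degree G \<le> k"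
    and "\<forall>m. ((\<lambda>s. coeff (F s) m) has_real_derivative coeff G m) (at t within I)"
  shows "((\<lambda>s. poly (F s) x) has_real_derivative poly G x) (at t within I)"
proof -
  have "((\<lambda>s. \<Sum>i\<le>k. coeff (F s) i * x ^ i) has_real_derivative (\<Sum>i\<le>k. coeff G i * x ^ i)) (at t within I)"
    by (intro DERIV_sum DERIV_cmult_right assms(4)[rule_format])
  then show ?thesis
    using assms(1-3) by (subst has_field_derivative_cong_eventually[where g = "\<lambda>s. \<Sum>i\<le>k. coeff (F s) i * x ^ i"])
      (auto simp: eventually_at_filter poly_eq_sum_coeff_atMost)
qed

lemma has_real_derivative_unique_closed_interval:
  fixes f g :: "real \<Rightarrow> real"
  assumes "a < b" "t \<in> {a..b}" "\<forall>s\<in>{a..b}. f s = g s"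
    and "(f has_real_derivative D) (at t within {a..b})" "(g has_real_derivative E) (at t within {a..b})"
  shows "D = E"
proof -
  have "(g has_real_derivative D) (at t within {a..b})"
    using assms(4) by (rule has_field_derivative_transform_within[where d = 1]) (use assms(2,3) in auto)
  then show ?thesis
    using assms vector_derivative_unique_within_closed_interval[of a b t g D E]
    by (simp add: has_real_derivative_iff_has_vector_derivative)
qed

lemma degree_le_of_has_derivative_coeff:
  fixes F :: "real \<Rightarrow> real poly"
  assumes "a < b" "t \<in> {a..b}" "\<forall>s\<in>{a..b}. degree (F s) \<le> k"
    and "\<forall>m. ((\<lambda>s. coeff (F s) m) has_real_derivative coeff G m) (at t within {a..b})"
  shows "degree G \<le> k"
proof (rule degree_le, intro allI impI)
  fix i assume "k < i"
  then have "\<forall>s\<in>{a..b}. coeff (F s) i = 0"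
    using assms(3) by (auto intro: coeff_eq_0 le_less_trans)
  then show "coeff G i = 0"
    using has_real_derivative_unique_closed_interval[OF assms(1,2), of _ "\<lambda>_. 0"] assms(4) by auto
qed

lemma has_real_derivative_integral_param:
  fixes f f' :: "real \<Rightarrow> real \<Rightarrow> real"
  assumes "t \<in> {T0..T1}"
    and "\<And>s x. s \<in> {T0..T1} \<Longrightarrow> x \<in> {a..b} \<Longrightarrow> ((\<lambda>s. f s x) has_real_derivative f' s x) (at s within {T0..T1})"
    and "continuous_on ({T0..T1} \<times> {a..b}) (\<lambda>p. f' (fst p) (snd p))"
    and "\<And>s. s \<in> {T0..T1} \<Longrightarrow> continuous_on {a..b} (f s)"
  shows "((\<lambda>s. integral {a..b} (f s)) has_real_derivative integral {a..b} (f' t)) (at t within {T0..T1})"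
  using leibniz_rule_field_derivative[of "{T0..T1}" a b f f' t] assms
  by (auto simp: split_beta intro: integrable_continuous_interval)

locale dg_semidiscrete_solution =
  fixes \<sigma> \<nu> T0 T1 :: real and V :: "real \<Rightarrow> real" and k N :: nat and xs :: "nat \<Rightarrow> real"
    and Z dZ :: "real \<Rightarrow> nat \<Rightarrow> nat \<Rightarrow> real poly"
  assumes smooth_V: "smooth_fun V"
    and mesh_increasing: "\<forall>j<N. xs j < xs (Suc j)"
    and degree_Z: "\<forall>t\<in>{T0..T1}. \<forall>a<6. \<forall>j<N. degree (Z t a j) \<le> k"
    and coeff_Z_derivative: "\<forall>t\<in>{T0..T1}. \<forall>a<6. \<forall>j<N. \<forall>m.
           ((\<lambda>s. coeff (Z s a j) m) has_real_derivative coeff (dZ t a j) m) (at t within {T0..T1})"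
    and coeff_dZ_continuous: "\<forall>a<6. \<forall>j<N. \<forall>m. continuous_on {T0..T1} (\<lambda>s. coeff (dZ s a j) m)"
    and dg_scheme: "\<forall>t\<in>{T0..T1}. \<forall>j<N. \<forall>\<phi>. (\<forall>a<6. degree (\<phi> a) \<le> k) \<longrightarrow>
           dg_eq \<sigma> \<nu> V N xs (Z t) (dZ t) j \<phi>"
begin

definition potential_pairing :: "real \<Rightarrow> (nat \<Rightarrow> real poly) \<Rightarrow> real" where
  "potential_pairing t G = (\<Sum>j<N. integral {xs j..xs (Suc j)} (\<lambda>x. deriv V (poly (Z t 0 j) x) * poly (G j) x))"

lemma V_differentiable: "V differentiable (at x)"
  using smooth_V unfolding smooth_fun_def by (metis funpow_0)

lemma continuous_on_V: "continuous_on A V"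
  by (simp add: V_differentiable differentiable_at_imp_differentiable_on differentiable_imp_continuous_on)

lemma continuous_on_deriv_V: "continuous_on A (deriv V)"
proof -
  have "deriv V differentiable (at x)" for x
    using smooth_V unfolding smooth_fun_def by (metis funpow_0 funpow_Suc_right comp_apply)
  then show ?thesis
    by (simp add: differentiable_at_imp_differentiable_on differentiable_imp_continuous_on)
qed

lemma dg_component_equations:
  assumes "t \<in> {T0..T1}" and "\<forall>j<N. degree (G j) \<le> k"
  shows "\<sigma>/2 * dg_mass N xs (dZ t 1) G - 1/2 * dg_mass N xs (dZ t 2) G + \<sigma>/2 * dg_dx N xs (Z t 4) G
           + \<nu> * dg_dx N xs (Z t 5) G = dg_mass N xs (Z t 3) G - potential_pairing t G"
    and "\<sigma> * dg_mass N xs (dZ t 0) G = \<sigma> * dg_mass N xs (Z t 4) G"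
    and "dg_mass N xs (dZ t 0) G = 2 * dg_dx N xs (Z t 3) G"
    and "dg_dx N xs (Z t 2) G = dg_mass N xs (Z t 0) G"
    and "\<sigma> * dg_dx N xs (Z t 0) G = \<sigma> * dg_mass N xs (Z t 1) G"
    and "\<nu> * dg_dx N xs (Z t 0) G = \<nu> * dg_mass N xs (Z t 5) G"
proof -
  have tested: "(\<Sum>b<6. Mmat \<sigma> c b * dg_mass N xs (dZ t b) G) + (\<Sum>b<6. Kmat \<sigma> \<nu> c b * dg_dx N xs (Z t b) G)
    = (\<Sum>j<N. integral {xs j..xs (Suc j)} (\<lambda>x. gradS V \<sigma> \<nu> (\<lambda>b. poly (Z t b j) x) c * poly (G j) x))"
    if "c < 6" for c
    using dg_scheme assms by (intro dg_eq_unit_test_sum that) auto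
  have integrable: "(\<lambda>x. deriv V (poly p x) * poly q x) integrable_on {a..b}" for p q :: "real poly" and a b
    by (intro integrable_continuous_interval continuous_intros continuous_on_compose2[OF continuous_on_deriv_V]) auto
  note simps = sum_lessThan_6 Mmat_def Kmat_def gradS_components[OF V_differentiable] dg_mass_def cell_mass_def
    sum_distrib_left mult.assoc sum_negf sum_divide_distrib[symmetric]
  show "\<sigma>/2 * dg_mass N xs (dZ t 1) G - 1/2 * dg_mass N xs (dZ t 2) G + \<sigma>/2 * dg_dx N xs (Z t 4) G
           + \<nu> * dg_dx N xs (Z t 5) G = dg_mass N xs (Z t 3) G - potential_pairing t G"
    using tested[of 0] by (simp add: simps potential_pairing_def left_diff_distrib integral_diff integrable
      integrable_poly_mult sum_subtractf)
  \<comment> \<open>simp would rewrite the index \<open>1\<close> to \<open>Suc 0\<close> before \<open>gradS_components\<close> could fire\<close>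
  show "\<sigma> * dg_mass N xs (dZ t 0) G = \<sigma> * dg_mass N xs (Z t 4) G"
    using tested[of 1, unfolded gradS_components(2)[OF V_differentiable]] by (simp add: simps)
  show "dg_mass N xs (dZ t 0) G = 2 * dg_dx N xs (Z t 3) G"
    using tested[of 2] by (simp add: simps)
  show "dg_dx N xs (Z t 2) G = dg_mass N xs (Z t 0) G"
    using tested[of 3] by (simp add: simps)
  show "\<sigma> * dg_dx N xs (Z t 0) G = \<sigma> * dg_mass N xs (Z t 1) G"
    using tested[of 4] by (simp add: simps)
  show "\<nu> * dg_dx N xs (Z t 0) G = \<nu> * dg_mass N xs (Z t 5) G"
    using tested[of 5] by (simp add: simps)
qed

lemma continuous_on_poly_Z:
  assumes "a < 6" "j < N"
  shows "continuous_on ({T0..T1} \<times> X) (\<lambda>p. poly (Z (fst p) a j) (snd p))"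
proof (rule continuous_on_poly_family[where k = k])
  show "\<forall>m. continuous_on {T0..T1} (\<lambda>s. coeff (Z s a j) m)"
    using coeff_Z_derivative assms by (auto intro!: DERIV_continuous_on)
qed (use degree_Z assms in auto)

context
  assumes T0_less_T1: "T0 < T1"
begin

lemma degree_dZ: "t \<in> {T0..T1} \<Longrightarrow> a < 6 \<Longrightarrow> j < N \<Longrightarrow> degree (dZ t a j) \<le> k"
  using degree_Z coeff_Z_derivative by (intro degree_le_of_has_derivative_coeff[OF T0_less_T1]) auto

lemma continuous_on_poly_dZ: "a < 6 \<Longrightarrow> j < N \<Longrightarrow> continuous_on ({T0..T1} \<times> X) (\<lambda>p. poly (dZ (fst p) a j) (snd p))"
  using degree_dZ coeff_dZ_continuous by (intro continuous_on_poly_family[where k = k]) auto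

lemma has_real_derivative_poly_Z:
  "t \<in> {T0..T1} \<Longrightarrow> a < 6 \<Longrightarrow> j < N \<Longrightarrow>
    ((\<lambda>s. poly (Z s a j) x) has_real_derivative poly (dZ t a j) x) (at t within {T0..T1})"
  using degree_Z degree_dZ coeff_Z_derivative by (intro has_real_derivative_poly_family[where k = k]) auto

lemma has_real_derivative_cell_mass:
  assumes "t \<in> {T0..T1}" "b < 6" "j < N"
  shows "((\<lambda>s. cell_mass xs j (Z s b j) q) has_real_derivative cell_mass xs j (dZ t b j) q) (at t within {T0..T1})"
  unfolding cell_mass_def
proof (rule has_real_derivative_integral_param[OF assms(1)])
  show "continuous_on ({T0..T1} \<times> {xs j..xs (Suc j)}) (\<lambda>p. poly (dZ (fst p) b j) (snd p) * poly q (snd p))"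
    using assms(2,3) by (intro continuous_intros continuous_on_poly_dZ)
qed (use assms has_real_derivative_poly_Z in \<open>auto intro!: DERIV_cmult_right continuous_intros\<close>)

lemma has_real_derivative_central_flux:
  assumes "t \<in> {T0..T1}" "b < 6" "i < N"
  shows "((\<lambda>s. central_flux N xs (Z s b) i) has_real_derivative central_flux N xs (dZ t b) i) (at t within {T0..T1})"
  unfolding central_flux_def
  using assms cell_pred_less[OF assms(3)] by (intro DERIV_cdivide DERIV_add has_real_derivative_poly_Z) auto

lemma has_real_derivative_dg_mass:
  "t \<in> {T0..T1} \<Longrightarrow> b < 6 \<Longrightarrow>
    ((\<lambda>s. dg_mass N xs (Z s b) G) has_real_derivative dg_mass N xs (dZ t b) G) (at t within {T0..T1})"
  unfolding dg_mass_def by (intro DERIV_sum has_real_derivative_cell_mass) auto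

lemma has_real_derivative_dg_dx:
  "t \<in> {T0..T1} \<Longrightarrow> b < 6 \<Longrightarrow>
    ((\<lambda>s. dg_dx N xs (Z s b) G) has_real_derivative dg_dx N xs (dZ t b) G) (at t within {T0..T1})"
  unfolding dg_dx_def cell_dx_def
  by (intro DERIV_sum DERIV_diff DERIV_add DERIV_minus DERIV_cmult_right has_real_derivative_cell_mass
      has_real_derivative_central_flux) auto

lemma dg_constraint_derivatives:
  assumes t: "t \<in> {T0..T1}" and G: "\<forall>j<N. degree (G j) \<le> k"
  shows "dg_dx N xs (dZ t 2) G = dg_mass N xs (dZ t 0) G"
    and "\<sigma> * dg_dx N xs (dZ t 0) G = \<sigma> * dg_mass N xs (dZ t 1) G"
    and "\<nu> * dg_dx N xs (dZ t 0) G = \<nu> * dg_mass N xs (dZ t 5) G"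
proof -
  note unique = has_real_derivative_unique_closed_interval[OF T0_less_T1 t]
  note dx = has_real_derivative_dg_dx[OF t] and mass = has_real_derivative_dg_mass[OF t]
  show "dg_dx N xs (dZ t 2) G = dg_mass N xs (dZ t 0) G"
    using dg_component_equations(4)[OF _ G] by (intro unique[OF _ dx mass]) auto
  show "\<sigma> * dg_dx N xs (dZ t 0) G = \<sigma> * dg_mass N xs (dZ t 1) G"
    using dg_component_equations(5)[OF _ G] by (intro unique[OF _ DERIV_cmult[OF dx] DERIV_cmult[OF mass]]) auto
  show "\<nu> * dg_dx N xs (dZ t 0) G = \<nu> * dg_mass N xs (dZ t 5) G"
    using dg_component_equations(6)[OF _ G] by (intro unique[OF _ DERIV_cmult[OF dx] DERIV_cmult[OF mass]]) auto
qed

lemma has_real_derivative_energy: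
  assumes t: "t \<in> {T0..T1}"
  shows "((\<lambda>s. energy V \<nu> N xs (Z s)) has_real_derivative
      \<nu> * dg_mass N xs (Z t 5) (dZ t 5) - potential_pairing t (dZ t 0)) (at t within {T0..T1})"
proof -
  define e' where "e' j s x = \<nu> * (poly (Z s 5 j) x * poly (dZ s 5 j) x) - deriv V (poly (Z s 0 j) x) * poly (dZ s 0 j) x"
    for j s x
  have V': "(V has_real_derivative deriv V y) (at y)" for y
    using V_differentiable DERIV_deriv_iff_real_differentiable by blast
  have cell: "((\<lambda>s. integral {xs j..xs (Suc j)} (\<lambda>x. - V (poly (Z s 0 j) x) + \<nu>/2 * (poly (Z s 5 j) x)^2))
      has_real_derivative integral {xs j..xs (Suc j)} (e' j t)) (at t within {T0..T1})" if j: "j < N" for j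
  proof (rule has_real_derivative_integral_param[OF t])
    show "((\<lambda>s. - V (poly (Z s 0 j) x) + \<nu>/2 * (poly (Z s 5 j) x)^2) has_real_derivative e' j s x)
        (at s within {T0..T1})" if "s \<in> {T0..T1}" for s x
      unfolding e'_def using that j
      by (auto intro!: derivative_eq_intros DERIV_chain2[OF V'] has_real_derivative_poly_Z)
    show "continuous_on ({T0..T1} \<times> {xs j..xs (Suc j)}) (\<lambda>p. e' j (fst p) (snd p))"
      unfolding e'_def using j
      by (intro continuous_intros continuous_on_poly_Z continuous_on_poly_dZ
          continuous_on_compose2[OF continuous_on_deriv_V continuous_on_poly_Z]) auto
    show "continuous_on {xs j..xs (Suc j)} (\<lambda>x. - V (poly (Z s 0 j) x) + \<nu>/2 * (poly (Z s 5 j) x)^2)" for s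
      by (intro continuous_intros continuous_on_compose2[OF continuous_on_V]) auto
  qed
  have "integral {xs j..xs (Suc j)} (e' j t) = \<nu> * cell_mass xs j (Z t 5 j) (dZ t 5 j)
      - integral {xs j..xs (Suc j)} (\<lambda>x. deriv V (poly (Z t 0 j) x) * poly (dZ t 0 j) x)" for j
    unfolding e'_def cell_mass_def
    by (subst integral_diff) (auto intro!: integrable_continuous_interval continuous_intros
        continuous_on_compose2[OF continuous_on_deriv_V])
  then show ?thesis
    unfolding energy_def dg_mass_def potential_pairing_def sum_distrib_left sum_subtractf[symmetric]
    using cell by (intro DERIV_sum) auto
qed

lemma energy_has_derivative_zero:
  assumes t: "t \<in> {T0..T1}"
  shows "((\<lambda>s. energy V \<nu> N xs (Z s)) has_real_derivative 0) (at t within {T0..T1})"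
proof -
  let ?A = "{G. \<forall>j<N. degree (G j) \<le> k}"
  have admissible: "\<forall>j<N. degree (Z t a j) \<le> k" "\<forall>j<N. degree (dZ t a j) \<le> k" if "a < 6" for a
    using degree_Z degree_dZ t that by auto
  have "potential_pairing t (dZ t 0) = \<nu> * dg_mass N xs (Z t 5) (dZ t 5)"
  proof (rule energy_rate_identity[where \<sigma> = \<sigma> and A = ?A and M = "dg_mass N xs" and B = "dg_dx N xs"
        and R = "potential_pairing t" and u' = "dZ t 0" and \<theta>' = "dZ t 1" and \<phi>' = "dZ t 2"
        and w = "Z t 3" and \<rho> = "Z t 4" and v = "Z t 5" and v' = "dZ t 5"])
    show "dg_mass N xs F G = dg_mass N xs G F" for F G
      by (rule dg_mass_commute)
    show "dg_dx N xs F G = - dg_dx N xs G F" for F G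
      using mesh_increasing by (intro dg_dx_skew) (simp add: less_imp_le)
  qed (use dg_component_equations[OF t] dg_constraint_derivatives[OF t] in blast | simp add: admissible)+
  then show ?thesis
    using has_real_derivative_energy[OF t] by simp
qed

end

lemma energy_conserved: "\<forall>t\<in>{T0..T1}. energy V \<nu> N xs (Z t) = energy V \<nu> N xs (Z T0)"
proof (cases "T0 < T1")
  case True
  then obtain c where "\<forall>t\<in>{T0..T1}. energy V \<nu> N xs (Z t) = c"
    using has_field_derivative_zero_constant[of "{T0..T1}"] energy_has_derivative_zero by blast
  with True show ?thesis by simp
next
  case False
  then have "{T0..T1} \<subseteq> {T0}" by auto
  then show ?thesis by auto
qed

end

theorem proposition4p6:
  fixes \<sigma> \<nu> T0 T1 :: real and V :: "real \<Rightarrow> real" and k N :: nat and xs :: "nat \<Rightarrow> real"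
    and Z dZ :: "real \<Rightarrow> nat \<Rightarrow> nat \<Rightarrow> real poly"
  assumes "smooth_fun V"
    and "N \<ge> 1"
    and "\<forall>j<N. xs j < xs (Suc j)"
    and "\<forall>t\<in>{T0..T1}. \<forall>a<6. \<forall>j<N. degree (Z t a j) \<le> k"
    and "\<forall>t\<in>{T0..T1}. \<forall>a<6. \<forall>j<N. \<forall>m.
           ((\<lambda>s. coeff (Z s a j) m) has_real_derivative coeff (dZ t a j) m) (at t within {T0..T1})"
    and "\<forall>a<6. \<forall>j<N. \<forall>m. continuous_on {T0..T1} (\<lambda>s. coeff (dZ s a j) m)"
    and "\<forall>t\<in>{T0..T1}. \<forall>j<N. \<forall>\<phi>. (\<forall>a<6. degree (\<phi> a) \<le> k) \<longrightarrow>
           dg_eq \<sigma> \<nu> V N xs (Z t) (dZ t) j \<phi>"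
  shows "\<forall>t\<in>{T0..T1}. energy V \<nu> N xs (Z t) = energy V \<nu> N xs (Z T0)"
proof -
  interpret dg_semidiscrete_solution \<sigma> \<nu> T0 T1 V k N xs Z dZ
    using assms by unfold_locales
  show ?thesis
    by (rule energy_conserved)
qed

end
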